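(* Let $d\ge2$ be even, $\mathcal I_d=\{-\tfrac d2,\ldots,\tfrac d2-1\}$, $\mathcal H_d$ with orthonormal basis $\{|j\rangle\}_{j\in\mathcal I_d}$, and $\mathcal R=G\circ\tilde G\circ G$ as defined in the context. Let $X\in\mathcal K$, written $X=\sum X^{i'j'}_{ij}|ij\rangle\langle i'j'|$. For every integer $\ell\ge1$, $\mathcal R^\ell(X)=\sum_{u\ne0}\xi^{(\ell)}_u\sum_a|a,a+u\rangle\langle a,a+u|+\sum_{u\ne0}\lambda^{(\ell)}_u\sum_a|a,a+u\rangle\langle a+u,a|+\eta^{(\ell)}\sum_a|aa\rangle\langle aa|$, where $u$ ranges over $\mathcal I_d\setminus\{0\}$, $a,i$ over $\mathcal I_d$, index additions are modulo $d$ in $\mathcal I_d$, and $\xi^{(\ell)}_u=\frac{\sum_iX^{i,i+u}_{i,i+u}}{d^{\ell+1}}+\frac{\sum_iX^{ii}_{ii}}{d^{\ell+1}}\cdot\frac{1-d^{-\ell}}{d-1}$, $\lambda^{(\ell)}_u=\frac{\sum_iX^{i+u,i}_{i,i+u}}{d^{\ell+1}}+\frac{\sum_iX^{ii}_{ii}}{d^{\ell+1}}\cdot\frac{1-d^{-\ell}}{d-1}$, $\eta^{(\ell)}=\frac{\sum_iX^{ii}_{ii}}{d^{2\ell+1}}$.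
   Context: $|ij\rangle=|i\rangle\otimes|j\rangle$; $\omega^x=e^{2\pi ix/d}$ for real $x$; $\hat Q=\sum_j j|j\rangle\langle j|$; $\widetilde{|k\rangle}=d^{-1/2}\sum_j\omega^{kj}|j\rangle$; $\hat P=\sum_k k\widetilde{|k\rangle}\widetilde{\langle k|}$; $V_{\alpha\beta}=\omega^{\alpha\hat Q+\beta\hat Q^2}$, $\tilde V_{\alpha\beta}=\omega^{\alpha\hat P+\beta\hat P^2}$; $G(X)=\mathbb E_{\alpha\beta}V_{\alpha\beta}^{\otimes2}X(V_{\alpha\beta}^\dagger)^{\otimes2}$, $\tilde G(X)=\mathbb E_{\alpha\beta}\tilde V_{\alpha\beta}^{\otimes2}X(\tilde V_{\alpha\beta}^\dagger)^{\otimes2}$ with $\alpha,\beta$ independent uniform on $[0,d)$. $I=\sum_{ab}|ab\rangle\langle ab|$, $F=\sum_{ab}|ab\rangle\langle ba|$; $\mathcal K$ is the orthogonal complement of $\mathrm{span}\{I,F\}$ in $\mathcal L(\mathcal H_d\otimes\mathcal H_d)$ with respect to the Hilbert–Schmidt inner product $\langle X,Y\rangle=\mathrm{Tr}X^\dagger Y$. *)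

theory Defs
  imports "HOL-Analysis.Analysis" "HOL-Library.Function_Algebras"
begin

definition Idx :: "nat \<Rightarrow> int set" where
  "Idx d = {- (int d div 2) ..< int d div 2}"

definition wrap :: "nat \<Rightarrow> int \<Rightarrow> int" where
  "wrap d x = ((x + int d div 2) mod int d) - int d div 2"

definition omega :: "nat \<Rightarrow> real \<Rightarrow> complex" where
  "omega d x = exp (2 * of_real pi * \<i> * of_real x / of_nat d)"

text \<open>Operators on H_d (matrices w.r.t. the basis |j>, j in I_d) and on
  H_d tensor H_d (matrices w.r.t. |ij> = |i> tensor |j>); entry M p q = <p|M|q>.
  Only entries with indices in I_d are meaningful.\<close>
type_synonym op1 = "int \<Rightarrow> int \<Rightarrow> complex"
type_synonym op2 = "int \<times> int \<Rightarrow> int \<times> int \<Rightarrow> complex"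

definition Idx2 :: "nat \<Rightarrow> (int \<times> int) set" where
  "Idx2 d = Idx d \<times> Idx d"

definition mult2 :: "nat \<Rightarrow> op2 \<Rightarrow> op2 \<Rightarrow> op2" where
  "mult2 d A B = (\<lambda>p q. \<Sum>r\<in>Idx2 d. A p r * B r q)"

definition adj2 :: "op2 \<Rightarrow> op2" where
  "adj2 A = (\<lambda>p q. cnj (A q p))"

definition tensor :: "op1 \<Rightarrow> op1 \<Rightarrow> op2" where
  "tensor A B = (\<lambda>(i, j) (i', j'). A i i' * B j j')"

definition smul2 :: "complex \<Rightarrow> op2 \<Rightarrow> op2" where
  "smul2 c A = (\<lambda>p q. c * A p q)"

definition ketbra2 :: "int \<times> int \<Rightarrow> int \<times> int \<Rightarrow> op2" where
  "ketbra2 p q = (\<lambda>p' q'. if p' = p \<and> q' = q then 1 else 0)"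

definition hs_inner :: "nat \<Rightarrow> op2 \<Rightarrow> op2 \<Rightarrow> complex" where
  "hs_inner d A B = (\<Sum>p\<in>Idx2 d. \<Sum>q\<in>Idx2 d. cnj (A q p) * B q p)"

definition Iop :: op2 where
  "Iop = (\<lambda>p q. if p = q then 1 else 0)"

definition Fop :: op2 where
  "Fop = (\<lambda>(a, b) q. if q = (b, a) then 1 else 0)"

definition Kspace :: "nat \<Rightarrow> op2 set" where
  "Kspace d = {X. hs_inner d Iop X = 0 \<and> hs_inner d Fop X = 0}"

text \<open>Fourier vector |k~> = d^(-1/2) sum_j omega^(kj) |j>, as a coordinate function.\<close>
definition fvec :: "nat \<Rightarrow> int \<Rightarrow> int \<Rightarrow> complex" where
  "fvec d k j = omega d (of_int (k * j)) / of_real (sqrt (real d))"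

text \<open>V_{ab} = omega^(a Q + b Q^2) = sum_j omega^(a j + b j^2) |j><j|
  (function of the diagonal operator Q).\<close>
definition Vop :: "nat \<Rightarrow> real \<Rightarrow> real \<Rightarrow> op1" where
  "Vop d a b = (\<lambda>j j'. if j = j' then omega d (a * of_int j + b * of_int j ^ 2) else 0)"

text \<open>V~_{ab} = omega^(a P + b P^2) = sum_k omega^(a k + b k^2) |k~><k~|
  (spectral decomposition of P = sum_k k |k~><k~|).\<close>
definition Vtop :: "nat \<Rightarrow> real \<Rightarrow> real \<Rightarrow> op1" where
  "Vtop d a b = (\<lambda>j j'. \<Sum>k\<in>Idx d.
      omega d (a * of_int k + b * of_int k ^ 2) * fvec d k j * cnj (fvec d k j'))"

definition unif2 :: "nat \<Rightarrow> (real \<times> real) measure" where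
  "unif2 d = uniform_measure lborel ({0..<real d} \<times> {0..<real d})"

definition twirl :: "nat \<Rightarrow> (real \<Rightarrow> real \<Rightarrow> op1) \<Rightarrow> op2 \<Rightarrow> op2" where
  "twirl d W X = (\<lambda>p q. \<integral>ab. (let U = tensor (W (fst ab) (snd ab)) (W (fst ab) (snd ab))
                                  in mult2 d (mult2 d U X) (adj2 U)) p q \<partial>unif2 d)"

definition Gmap :: "nat \<Rightarrow> op2 \<Rightarrow> op2" where
  "Gmap d = twirl d (Vop d)"

definition Gtmap :: "nat \<Rightarrow> op2 \<Rightarrow> op2" where
  "Gtmap d = twirl d (Vtop d)"

definition Rmap :: "nat \<Rightarrow> op2 \<Rightarrow> op2" where
  "Rmap d = Gmap d \<circ> Gtmap d \<circ> Gmap d"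

end

theory Submission
  imports Defs
begin

(* If W a b = omega^(a A + b A^2) with A = sum_k k |e_k><e_k|, then averaging
   (W a b (x) W a b) X (W a b (x) W a b)^dagger over (a, b) in [0, d)^2 keeps exactly those
   matrix elements of X in the basis e_k (x) e_l whose row and column indices have the same sum
   and the same sum of squares, i.e. coincide up to swapping the two tensor factors. Hence G keeps
   the entries X(p, p) and X(p, swap p), and G~ does the same in the Fourier basis, where character
   sums turn it into an explicit kernel in the computational basis. Consequently R maps every X
   orthogonal to I and F to an operator of the form
     sum_u xi_u sum_a |a, a+u><a, a+u| + sum_u la_u sum_a |a, a+u><a+u, a| + eta sum_a |aa><aa|
   with coefficients given by the shifted diagonal sums of X. Such operators are again orthogonal
   to I and F, and R acts on their coefficients by xi -> xi/d + eta/d^2, la -> la/d + eta/d^2,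
   eta -> eta/d^2; solving this recursion gives the closed form. *)

section \<open>Roots of unity and the index set\<close>

lemma omega_add: "omega d (x + y) = omega d x * omega d y"
  unfolding omega_def by (simp add: distrib_left distrib_right add_divide_distrib exp_add)

lemma omega_0 [simp]: "omega d 0 = 1"
  unfolding omega_def by simp

lemma norm_omega [simp]: "norm (omega d x) = 1"
  unfolding omega_def by (simp add: norm_exp_eq_Re)

lemma cnj_omega: "cnj (omega d x) = omega d (- x)"
  unfolding omega_def by (simp add: exp_cnj)

lemma omega_of_int_eq_1_iff:
  assumes "0 < d"
  shows "omega d (of_int c) = 1 \<longleftrightarrow> int d dvd c"
proof -
  have "omega d (of_int c) = exp (\<i> * complex_of_real (2 * pi * of_int c / real d))"
    unfolding omega_def by (simp add: field_simps)
  also have "\<dots> = 1 \<longleftrightarrow> (\<exists>n::int. 2 * pi * of_int c / real d = 2 * pi * of_int n)"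
    by (simp add: exp_eq_1 mult_ac)
  also have "\<dots> \<longleftrightarrow> (\<exists>n::int. of_int c = real d * of_int n)"
    using assms by (auto simp: field_simps)
  also have "\<dots> \<longleftrightarrow> int d dvd c"
    by (metis (mono_tags, opaque_lifting) dvd_def of_int_eq_iff of_int_mult of_int_of_nat_eq)
  finally show ?thesis .
qed

lemma omega_of_int_mod_cong:
  assumes "0 < d" and "x mod int d = y mod int d"
  shows "omega d (of_int (x * c)) = omega d (of_int (y * c))"
proof -
  obtain k where "x = y + int d * k"
    using assms(2) by (metis mod_eqE dvd_def add.commute diff_add_cancel)
  then have "omega d (of_int (x * c)) = omega d (of_int (y * c)) * omega d (of_int (int d * (k * c)))"
    by (simp add: algebra_simps flip: omega_add)
  moreover have "omega d (of_int (int d * (k * c))) = 1"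
    by (simp only: omega_of_int_eq_1_iff[OF assms(1)] dvd_triv_left)
  ultimately show ?thesis
    by simp
qed

lemma finite_Idx [simp]: "finite (Idx d)"
  unfolding Idx_def by simp

lemma finite_Idx2 [simp]: "finite (Idx2 d)"
  unfolding Idx2_def by simp

lemma sum_Idx2: "(\<Sum>k\<in>Idx2 d. f k) = (\<Sum>i\<in>Idx d. \<Sum>j\<in>Idx d. f (i, j))"
  unfolding Idx2_def by (simp add: sum.cartesian_product)

lemma mem_Idx2_iff: "p \<in> Idx2 d \<longleftrightarrow> fst p \<in> Idx d \<and> snd p \<in> Idx d"
  unfolding Idx2_def by (simp add: mem_Times_iff)

lemma swap_mem_Idx2 [simp]: "prod.swap p \<in> Idx2 d \<longleftrightarrow> p \<in> Idx2 d"
  unfolding mem_Idx2_iff by auto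

lemma wrap_mod: "wrap d x mod int d = x mod int d"
  unfolding wrap_def by (simp add: mod_diff_left_eq mod_add_left_eq)

lemma wrap_eq_iff: "wrap d x = wrap d y \<longleftrightarrow> x mod int d = y mod int d"
  by (metis wrap_def wrap_mod mod_add_left_eq)

lemma wrap_add_wrap: "wrap d (i + wrap d c) = wrap d (i + c)"
proof -
  have "(i + wrap d c) mod int d = (i + c) mod int d"
    by (metis mod_add_right_eq wrap_mod)
  then show ?thesis
    by (simp add: wrap_eq_iff)
qed

lemma sum_fun_apply: "(\<Sum>a\<in>A. F a) x = (\<Sum>a\<in>A. F a x)"
  by (induction A rule: infinite_finite_induct) simp_all

lemma of_bool_mult_eq_if: "of_bool P * (x :: 'a :: semiring_1) = (if P then x else 0)"
  by (cases P) simp_all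

definition dot2 :: "int \<times> int \<Rightarrow> int \<times> int \<Rightarrow> int" where
  "dot2 k v = fst k * fst v + snd k * snd v"

definition dvd2 :: "int \<Rightarrow> int \<times> int \<Rightarrow> bool" where
  "dvd2 n v \<longleftrightarrow> n dvd fst v \<and> n dvd snd v"

section \<open>Averaging over the phases\<close>

lemma has_integral_omega_interval:
  assumes "0 < d"
  shows "((\<lambda>x. omega d (x * of_int m)) has_integral (if m = 0 then of_nat d else 0)) {0..<real d}"
proof -
  have "((\<lambda>x. omega d (x * of_int m)) has_integral (if m = 0 then of_nat d else 0)) {0..real d}"
  proof (cases "m = 0")
    case True
    then show ?thesis
      using has_integral_const_real[of "1::complex" 0 "real d"] by (simp add: scaleR_conv_of_real)
  next
    case False
    define c where "c = 2 * of_real pi * \<i> * of_int m / (of_nat d :: complex)"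
    have "c \<noteq> 0"
      using False assms by (simp add: c_def)
    have omega_eq: "omega d (x * of_int m) = exp (of_real x * c)" for x
      unfolding omega_def c_def by (simp add: field_simps)
    have antiderivative:
      "((\<lambda>x. exp (of_real x * c) / c) has_vector_derivative exp (of_real x * c)) (at x within {0..real d})"
      for x
    proof -
      have "((\<lambda>z. exp (z * c) / c) has_field_derivative exp (of_real x * c)) (at (of_real x))"
        using \<open>c \<noteq> 0\<close> by (auto intro!: derivative_eq_intros)
      then show ?thesis
        by (rule has_vector_derivative_real_field)
    qed
    have "((\<lambda>x. exp (of_real x * c)) has_integral (exp (of_real (real d) * c) / c - exp (of_real 0 * c) / c))
        {0..real d}"
      by (rule fundamental_theorem_of_calculus) (auto intro: antiderivative)
    moreover have "exp (of_real (real d) * c) = 1"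
      using assms by (simp add: c_def exp_eq_1)
    ultimately show ?thesis
      using False by (simp add: omega_eq)
  qed
  then show ?thesis
    by (subst has_integral_spike_set_eq[where T = "{0..real d}"])
      (auto intro: negligible_subset[OF negligible_sing[of "real d"]])
qed

lemma set_integral_omega_interval:
  assumes "0 < d"
  shows "set_integrable lborel {0..<real d} (\<lambda>x. omega d (x * of_int m))"
    and "(LINT x:{0..<real d}|lborel. omega d (x * of_int m)) = (if m = 0 then of_nat d else 0)"
proof -
  have "continuous_on {0..real d} (\<lambda>x. omega d (x * of_int m))"
    unfolding omega_def divide_inverse by (intro continuous_intros)
  then show integrable: "set_integrable lborel {0..<real d} (\<lambda>x. omega d (x * of_int m))"
    by (rule set_integrable_subset[OF borel_integrable_atLeastAtMost']) auto
  show "(LINT x:{0..<real d}|lborel. omega d (x * of_int m)) = (if m = 0 then of_nat d else 0)"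
    using integral_unique[OF has_integral_omega_interval[OF assms]]
    by (simp add: set_borel_integral_eq_integral(2)[OF integrable])
qed

lemma emeasure_lborel_square: "emeasure lborel ({0..<real d} \<times> {0..<real d}) = ennreal (real d ^ 2)"
proof -
  have "emeasure lborel ({0..<real d} \<times> {0..<real d}) = emeasure lborel {0..<real d} * emeasure lborel {0..<real d}"
    unfolding lborel_prod[symmetric] by (rule lborel.emeasure_pair_measure_Times) auto
  then show ?thesis
    by (simp add: ennreal_mult power2_eq_square)
qed

lemma unif2_eq_density:
  assumes "0 < d"
  shows "unif2 d = density lborel (\<lambda>x. ennreal (indicator ({0..<real d} \<times> {0..<real d}) x / real d ^ 2))"
proof -
  have "1 / ennreal (real d ^ 2) = ennreal (1 / real d ^ 2)"
    using divide_ennreal[of 1 "real d ^ 2"] assms by simp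
  then have "indicator A x / ennreal (real d ^ 2) = ennreal (indicator A x / real d ^ 2)"
    for A :: "(real \<times> real) set" and x
    by (simp add: indicator_def)
  then show ?thesis
    unfolding unif2_def uniform_measure_def emeasure_lborel_square by (simp only:)
qed

definition unif_char :: "nat \<Rightarrow> int \<Rightarrow> int \<Rightarrow> real \<times> real \<Rightarrow> complex" where
  "unif_char d n m ab = omega d (fst ab * of_int n + snd ab * of_int m)"

lemma borel_measurable_unif_char: "unif_char d n m \<in> borel_measurable lborel"
proof -
  have "unif_char d n m \<in> borel_measurable borel"
    unfolding unif_char_def[abs_def] omega_def divide_inverse
    by (intro borel_measurable_continuous_onI continuous_intros)
  then show ?thesis
    by simp
qed

lemma integrable_square_unif_char:
  "integrable lborel (\<lambda>ab. (indicator ({0..<real d} \<times> {0..<real d}) ab / real d ^ 2) *\<^sub>R unif_char d n m ab)"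
proof -
  have "{0..<real d} \<times> {0..<real d} \<in> sets lborel"
    unfolding lborel_prod[symmetric] by simp
  then have "integrable lborel (\<lambda>ab. indicator ({0..<real d} \<times> {0..<real d}) ab *\<^sub>R unif_char d n m ab)"
    by (intro integrableI_bounded_set_indicator[where B = 1] borel_measurable_unif_char)
      (simp_all add: emeasure_lborel_square unif_char_def)
  then have "integrable lborel (\<lambda>ab. (1 / real d ^ 2) *\<^sub>R
      (indicator ({0..<real d} \<times> {0..<real d}) ab *\<^sub>R unif_char d n m ab))"
    by (rule integrable_scaleR_right)
  then show ?thesis
    by simp
qed

lemma borel_measurable_square_density:
  "(\<lambda>x. indicator ({0..<real d} \<times> {0..<real d}) x / real d ^ 2 :: real) \<in> borel_measurable lborel"
  unfolding lborel_prod[symmetric] by measurable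

lemma integrable_unif2_char: "0 < d \<Longrightarrow> integrable (unif2 d) (unif_char d n m)"
  unfolding unif2_eq_density
  using integrable_square_unif_char borel_measurable_unif_char borel_measurable_square_density
  by (subst integrable_density) simp_all

lemma integral_unif2_char:
  assumes "0 < d"
  shows "integral\<^sup>L (unif2 d) (unif_char d n m) = of_bool (n = 0 \<and> m = 0)"
proof -
  let ?I = "{0..<real d}"
  have split: "(indicator (?I \<times> ?I) (x, y) / real d ^ 2) *\<^sub>R unif_char d n m (x, y) =
      (indicator ?I x *\<^sub>R omega d (x * of_int n) / of_nat d ^ 2) * (indicator ?I y *\<^sub>R omega d (y * of_int m))"
    for x y
    by (simp add: unif_char_def omega_add indicator_times scaleR_conv_of_real)
  have "integral\<^sup>L (unif2 d) (unif_char d n m) =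
      (\<integral>ab. (indicator (?I \<times> ?I) ab / real d ^ 2) *\<^sub>R unif_char d n m ab \<partial>(lborel \<Otimes>\<^sub>M lborel))"
    unfolding unif2_eq_density[OF assms] lborel_prod
    using borel_measurable_unif_char borel_measurable_square_density
    by (subst integral_density) (simp_all add: lborel_prod)
  also have "\<dots> = (\<integral>x. (\<integral>y. (indicator (?I \<times> ?I) (x, y) / real d ^ 2) *\<^sub>R unif_char d n m (x, y) \<partial>lborel) \<partial>lborel)"
    using integrable_square_unif_char by (intro lborel_pair.integral_fst'[symmetric]) (simp add: lborel_prod)
  also have "\<dots> = (\<integral>x. indicator ?I x *\<^sub>R omega d (x * of_int n) / of_nat d ^ 2 \<partial>lborel) *
      (\<integral>y. indicator ?I y *\<^sub>R omega d (y * of_int m) \<partial>lborel)"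
    by (simp only: split integral_mult_right_zero integral_mult_left_zero)
  also have "\<dots> = (LINT x:?I|lborel. omega d (x * of_int n)) / of_nat d ^ 2 * (LINT y:?I|lborel. omega d (y * of_int m))"
    unfolding set_lebesgue_integral_def by (simp only: integral_divide_zero)
  also have "\<dots> = of_bool (n = 0 \<and> m = 0)"
    unfolding set_integral_omega_interval(2)[OF assms] using assms by (simp add: power2_eq_square)
  finally show ?thesis .
qed

section \<open>Twirls as kernels\<close>

definition basis2 :: "(int \<Rightarrow> int \<Rightarrow> complex) \<Rightarrow> int \<times> int \<Rightarrow> int \<times> int \<Rightarrow> complex" where
  "basis2 e k p = e (fst k) (fst p) * e (snd k) (snd p)"

definition same_moments :: "int \<times> int \<Rightarrow> int \<times> int \<Rightarrow> bool" where
  "same_moments k k' \<longleftrightarrow>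
    fst k + snd k = fst k' + snd k' \<and> fst k ^ 2 + snd k ^ 2 = fst k' ^ 2 + snd k' ^ 2"

(* e k j is the j-th coordinate of the k-th basis vector, so W a b = omega^(a A + b A^2) for
   A = sum_k k |e_k><e_k|. *)
definition phase_family :: "nat \<Rightarrow> (real \<Rightarrow> real \<Rightarrow> op1) \<Rightarrow> (int \<Rightarrow> int \<Rightarrow> complex) \<Rightarrow> bool" where
  "phase_family d W e \<longleftrightarrow> (\<forall>a b. \<forall>j\<in>Idx d. \<forall>j'\<in>Idx d.
      W a b j j' = (\<Sum>k\<in>Idx d. omega d (a * of_int k + b * of_int k ^ 2) * e k j * cnj (e k j')))"

definition twirl_kernel ::
    "nat \<Rightarrow> (int \<Rightarrow> int \<Rightarrow> complex) \<Rightarrow> int \<times> int \<Rightarrow> int \<times> int \<Rightarrow> int \<times> int \<Rightarrow> int \<times> int \<Rightarrow> complex" where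
  "twirl_kernel d e p q r s = (\<Sum>k\<in>Idx2 d. \<Sum>k'\<in>Idx2 d. if same_moments k k'
      then basis2 e k p * cnj (basis2 e k' q) * cnj (basis2 e k r) * basis2 e k' s else 0)"

lemma same_moments_iff: "same_moments k k' \<longleftrightarrow> k' = k \<or> k' = prod.swap k"
proof
  obtain k1 k2 k1' k2' where k: "k = (k1, k2)" and k': "k' = (k1', k2')"
    by fastforce
  assume "same_moments k k'"
  then have k2: "k2 = k1' + k2' - k1" and "k1 ^ 2 + k2 ^ 2 = k1' ^ 2 + k2' ^ 2"
    by (simp_all add: same_moments_def k k')
  then have "k1 ^ 2 + (k1' + k2' - k1) ^ 2 = k1' ^ 2 + k2' ^ 2"
    by simp
  then have "2 * ((k1 - k1') * (k1 - k2')) = 0"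
    by (simp add: power2_eq_square algebra_simps)
  then have "k1 = k1' \<or> k1 = k2'"
    by simp
  with k2 show "k' = k \<or> k' = prod.swap k"
    by (auto simp: k k')
qed (auto simp: same_moments_def)

lemma sum_same_moments:
  assumes "k \<in> Idx2 d"
  shows "(\<Sum>k'\<in>Idx2 d. if same_moments k k' then f k' else 0) =
    f k + (if fst k = snd k then 0 else f (prod.swap k))"
proof -
  have "(\<Sum>k'\<in>Idx2 d. if same_moments k k' then f k' else 0) = (\<Sum>k'\<in>Idx2 d \<inter> {k, prod.swap k}. f k')"
    by (simp add: same_moments_iff sum.inter_restrict)
  also have "Idx2 d \<inter> {k, prod.swap k} = {k, prod.swap k}"
    using assms by auto
  also have "(\<Sum>k'\<in>{k, prod.swap k}. f k') = f k + (if fst k = snd k then 0 else f (prod.swap k))"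
    by (cases k) auto
  finally show ?thesis .
qed

lemma tensor_phase_family:
  assumes "phase_family d W e" and "p \<in> Idx2 d" and "r \<in> Idx2 d"
  shows "tensor (W a b) (W a b) p r = (\<Sum>k\<in>Idx2 d.
    omega d (a * of_int (fst k + snd k) + b * of_int (fst k ^ 2 + snd k ^ 2)) * basis2 e k p * cnj (basis2 e k r))"
proof -
  have "tensor (W a b) (W a b) p r = W a b (fst p) (fst r) * W a b (snd p) (snd r)"
    by (simp add: tensor_def split_beta)
  also have "\<dots> = (\<Sum>i\<in>Idx d. \<Sum>j\<in>Idx d.
      (omega d (a * of_int i + b * of_int i ^ 2) * e i (fst p) * cnj (e i (fst r))) *
      (omega d (a * of_int j + b * of_int j ^ 2) * e j (snd p) * cnj (e j (snd r))))"
    using assms by (simp add: phase_family_def mem_Idx2_iff sum_product)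
  also have "\<dots> = (\<Sum>k\<in>Idx2 d.
      omega d (a * of_int (fst k + snd k) + b * of_int (fst k ^ 2 + snd k ^ 2)) * basis2 e k p * cnj (basis2 e k r))"
    unfolding sum_Idx2 basis2_def by (simp add: omega_add algebra_simps)
  finally show ?thesis .
qed

lemma twirl_integrand:
  assumes W: "phase_family d W e" and p: "p \<in> Idx2 d" and q: "q \<in> Idx2 d"
  shows "(let U = tensor (W a b) (W a b) in mult2 d (mult2 d U X) (adj2 U)) p q =
    (\<Sum>r\<in>Idx2 d. \<Sum>s\<in>Idx2 d. X r s * (\<Sum>k\<in>Idx2 d. \<Sum>k'\<in>Idx2 d.
      unif_char d (fst k + snd k - fst k' - snd k') (fst k ^ 2 + snd k ^ 2 - fst k' ^ 2 - snd k' ^ 2) (a, b) *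
      (basis2 e k p * cnj (basis2 e k' q) * cnj (basis2 e k r) * basis2 e k' s)))"
proof -
  let ?U = "tensor (W a b) (W a b)"
  let ?ph = "\<lambda>k. omega d (a * of_int (fst k + snd k) + b * of_int (fst k ^ 2 + snd k ^ 2))"
  have ph: "?ph k * cnj (?ph k') =
      unif_char d (fst k + snd k - fst k' - snd k') (fst k ^ 2 + snd k ^ 2 - fst k' ^ 2 - snd k' ^ 2) (a, b)"
    for k k'
    by (simp add: unif_char_def cnj_omega algebra_simps flip: omega_add)
  have U: "?U p r * cnj (?U q s) = (\<Sum>k\<in>Idx2 d. \<Sum>k'\<in>Idx2 d. ?ph k * cnj (?ph k') *
      (basis2 e k p * cnj (basis2 e k' q) * cnj (basis2 e k r) * basis2 e k' s))"
    if "r \<in> Idx2 d" "s \<in> Idx2 d" for r s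
    using that p q by (simp add: tensor_phase_family[OF W] sum_product mult_ac)
  have "mult2 d (mult2 d ?U X) (adj2 ?U) p q = (\<Sum>s\<in>Idx2 d. \<Sum>r\<in>Idx2 d. X r s * (?U p r * cnj (?U q s)))"
    unfolding mult2_def adj2_def sum_distrib_right by (simp add: mult_ac)
  also have "\<dots> = (\<Sum>r\<in>Idx2 d. \<Sum>s\<in>Idx2 d. X r s * (?U p r * cnj (?U q s)))"
    by (rule sum.swap)
  finally show ?thesis
    unfolding Let_def by (simp only: U ph cong: sum.cong)
qed

lemma twirl_eq_kernel:
  assumes "0 < d" and W: "phase_family d W e" and p: "p \<in> Idx2 d" and q: "q \<in> Idx2 d"
  shows "twirl d W X p q = (\<Sum>r\<in>Idx2 d. \<Sum>s\<in>Idx2 d. X r s * twirl_kernel d e p q r s)"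
proof -
  have "twirl d W X p q = (\<integral>ab. (\<Sum>r\<in>Idx2 d. \<Sum>s\<in>Idx2 d. X r s * (\<Sum>k\<in>Idx2 d. \<Sum>k'\<in>Idx2 d.
      unif_char d (fst k + snd k - fst k' - snd k') (fst k ^ 2 + snd k ^ 2 - fst k' ^ 2 - snd k' ^ 2) ab *
      (basis2 e k p * cnj (basis2 e k' q) * cnj (basis2 e k r) * basis2 e k' s))) \<partial>unif2 d)"
    unfolding twirl_def twirl_integrand[OF W p q] by simp
  also have "\<dots> = (\<Sum>r\<in>Idx2 d. \<Sum>s\<in>Idx2 d. X r s * (\<Sum>k\<in>Idx2 d. \<Sum>k'\<in>Idx2 d.
      of_bool (fst k + snd k - fst k' - snd k' = 0 \<and> fst k ^ 2 + snd k ^ 2 - fst k' ^ 2 - snd k' ^ 2 = 0) *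
      (basis2 e k p * cnj (basis2 e k' q) * cnj (basis2 e k r) * basis2 e k' s)))"
    using integrable_unif2_char[OF assms(1)] integral_unif2_char[OF assms(1)] by (simp del: of_bool_conj)
  also have "\<dots> = (\<Sum>r\<in>Idx2 d. \<Sum>s\<in>Idx2 d. X r s * twirl_kernel d e p q r s)"
    unfolding twirl_kernel_def by (intro sum.cong refl arg_cong2[where f = "(*)"]) (auto simp: same_moments_def)
  finally show ?thesis .
qed

definition delta_basis :: "int \<Rightarrow> int \<Rightarrow> complex" where
  "delta_basis k j = (if k = j then 1 else 0)"

lemma basis2_delta_basis: "basis2 delta_basis k p = (if k = p then 1 else 0)"
  by (simp add: basis2_def delta_basis_def prod_eq_iff)

lemma phase_family_Vop: "phase_family d (Vop d) delta_basis"
  unfolding phase_family_def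
proof (intro allI ballI)
  fix a b j j' assume "j \<in> Idx d" "j' \<in> Idx d"
  have "(\<Sum>k\<in>Idx d. omega d (a * of_int k + b * of_int k ^ 2) * delta_basis k j * cnj (delta_basis k j')) =
      (\<Sum>k\<in>Idx d. if k = j then (if j = j' then omega d (a * of_int j + b * of_int j ^ 2) else 0) else 0)"
    by (intro sum.cong refl) (simp add: delta_basis_def)
  also have "\<dots> = Vop d a b j j'"
    using \<open>j \<in> Idx d\<close> by (simp add: Vop_def)
  finally show "Vop d a b j j' =
      (\<Sum>k\<in>Idx d. omega d (a * of_int k + b * of_int k ^ 2) * delta_basis k j * cnj (delta_basis k j'))" ..
qed

lemma Gmap_apply:
  assumes "0 < d" and p: "p \<in> Idx2 d" and q: "q \<in> Idx2 d"
  shows "Gmap d X p q = (if same_moments p q then X p q else 0)"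
proof -
  have "twirl_kernel d delta_basis p q r s = (\<Sum>k\<in>Idx2 d. \<Sum>k'\<in>Idx2 d.
      if k' = q then if k = p then if r = p \<and> s = q \<and> same_moments p q then 1 else 0 else 0 else 0)"
    for r s
    unfolding twirl_kernel_def basis2_delta_basis by (intro sum.cong refl) auto
  then have kernel: "twirl_kernel d delta_basis p q r s = (if r = p \<and> s = q \<and> same_moments p q then 1 else 0)"
    for r s
    using p q by (simp only: sum.delta finite_Idx2 if_True)
  have "Gmap d X p q = (\<Sum>r\<in>Idx2 d. \<Sum>s\<in>Idx2 d.
      if s = q then if r = p then if same_moments p q then X p q else 0 else 0 else 0)"
    unfolding Gmap_def twirl_eq_kernel[OF assms(1) phase_family_Vop p q] kernel
    by (intro sum.cong refl) simp
  then show ?thesis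
    using p q by (simp only: sum.delta finite_Idx2 if_True)
qed

lemma phase_family_Vtop: "phase_family d (Vtop d) (fvec d)"
  unfolding phase_family_def Vtop_def by simp

lemma basis2_fvec: "basis2 (fvec d) k p = omega d (of_int (dot2 k p)) / of_nat d"
proof -
  have "complex_of_real (sqrt (real d)) * complex_of_real (sqrt (real d)) = of_nat d"
    by (simp flip: of_real_mult)
  then show ?thesis
    by (simp add: basis2_def fvec_def dot2_def omega_add)
qed

lemma fvec_kernel_term:
  "basis2 (fvec d) k p * cnj (basis2 (fvec d) k' q) * cnj (basis2 (fvec d) k r) * basis2 (fvec d) k' s =
    omega d (of_int (dot2 k (p - r) - dot2 k' (q - s))) / of_nat d ^ 4"
  by (simp add: basis2_fvec cnj_omega dot2_def power4_eq_xxxx algebra_simps flip: omega_add)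

section \<open>Invariants and the shape of the output\<close>

definition trace2 :: "nat \<Rightarrow> op2 \<Rightarrow> complex" where
  "trace2 d X = (\<Sum>r\<in>Idx2 d. X r r)"

definition swap_trace :: "nat \<Rightarrow> op2 \<Rightarrow> complex" where
  "swap_trace d X = (\<Sum>r\<in>Idx2 d. X r (prod.swap r))"

definition diag_sum :: "nat \<Rightarrow> op2 \<Rightarrow> complex" where
  "diag_sum d X = (\<Sum>i\<in>Idx d. X (i, i) (i, i))"

definition shift_sum :: "nat \<Rightarrow> op2 \<Rightarrow> int \<Rightarrow> complex" where
  "shift_sum d X u = (\<Sum>i\<in>Idx d. X (i, wrap d (i + u)) (i, wrap d (i + u)))"

definition swap_shift_sum :: "nat \<Rightarrow> op2 \<Rightarrow> int \<Rightarrow> complex" where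
  "swap_shift_sum d X u = (\<Sum>i\<in>Idx d. X (i, wrap d (i + u)) (wrap d (i + u), i))"

lemma trace2_eq_0_if_Kspace:
  assumes "X \<in> Kspace d"
  shows "trace2 d X = 0"
proof -
  have "hs_inner d Iop X = (\<Sum>p\<in>Idx2 d. \<Sum>q\<in>Idx2 d. if q = p then X q p else 0)"
    unfolding hs_inner_def Iop_def by (intro sum.cong refl) simp
  also have "\<dots> = trace2 d X"
    by (simp add: trace2_def)
  finally have "hs_inner d Iop X = trace2 d X" .
  then show ?thesis
    using assms by (simp add: Kspace_def)
qed

lemma swap_trace_eq_0_if_Kspace:
  assumes "X \<in> Kspace d"
  shows "swap_trace d X = 0"
proof -
  have "hs_inner d Fop X = (\<Sum>q\<in>Idx2 d. \<Sum>p\<in>Idx2 d. if p = prod.swap q then X q p else 0)"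
    unfolding hs_inner_def Fop_def by (subst sum.swap) (intro sum.cong refl; auto split: prod.splits)
  also have "\<dots> = swap_trace d X"
    unfolding swap_trace_def by (intro sum.cong refl) simp
  finally show ?thesis
    using assms by (simp add: Kspace_def)
qed

(* Entrywise, pattern_op d xi la eta is the operator
   sum_u xi u sum_a |a, a+u><a, a+u| + sum_u la u sum_a |a, a+u><a+u, a| + eta sum_a |aa><aa|;
   only the values of xi and la on Idx d - {0} matter. *)
definition pattern_op :: "nat \<Rightarrow> (int \<Rightarrow> complex) \<Rightarrow> (int \<Rightarrow> complex) \<Rightarrow> complex \<Rightarrow> op2" where
  "pattern_op d xi la eta p q =
    (if q = p then if fst p = snd p then eta else xi (wrap d (snd p - fst p))
     else if q = prod.swap p then la (wrap d (snd p - fst p)) else 0)"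

(* The coefficient xi^(l)_u of the theorem, for s the u-th shifted diagonal sum and D the diagonal
   sum of X. *)
definition decay_coeff :: "'a::field \<Rightarrow> 'a \<Rightarrow> 'a \<Rightarrow> nat \<Rightarrow> 'a" where
  "decay_coeff c s D l = s / c ^ (l + 1) + D / c ^ (l + 1) * ((1 - 1 / c ^ l) / (c - 1))"

lemma decay_coeff_1:
  assumes "c \<noteq> 0" and "c \<noteq> 1"
  shows "decay_coeff c s D (Suc 0) = s / c ^ 2 + D / c ^ 3"
  using assms by (simp add: decay_coeff_def field_simps power2_eq_square power3_eq_cube)

lemma decay_coeff_Suc:
  assumes "c \<noteq> 0" and "c \<noteq> 1"
  shows "decay_coeff c s D (Suc l) = decay_coeff c s D l / c + D / c ^ (2 * l + 1) / c ^ 2"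
proof -
  define x where "x = c ^ l"
  have "x \<noteq> 0" and "c - 1 \<noteq> 0"
    using assms by (simp_all add: x_def)
  moreover have "c ^ (Suc l + 1) = c * c * x" "c ^ (l + 1) = c * x" "c ^ (2 * l + 1) = c * x * x"
    "c ^ Suc l = c * x" "c ^ l = x" "c ^ 2 = c * c"
    by (simp_all add: x_def power_add mult_2 power2_eq_square)
  ultimately show ?thesis
    using assms unfolding decay_coeff_def by (simp add: field_simps)
qed

section \<open>Index arithmetic and character sums for even d\<close>

locale even_dim =
  fixes d :: nat
  assumes two_le_d: "2 \<le> d" and even_d: "even d"
begin

lemma d_pos: "0 < d"
  using two_le_d by simp

lemma of_nat_d_neq_0: "(of_nat d :: 'a :: semiring_char_0) \<noteq> 0"
  using d_pos by simp

lemma of_nat_d_neq_1: "(of_nat d :: 'a :: semiring_char_0) \<noteq> 1"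
  using two_le_d by simp

lemma int_d_eq: "int d = 2 * (int d div 2)"
  using even_d by (auto elim: evenE)

lemma card_Idx: "card (Idx d) = d"
  unfolding Idx_def using int_d_eq by simp

lemma zero_in_Idx: "0 \<in> Idx d"
  unfolding Idx_def using two_le_d by auto

lemma wrap_in_Idx: "wrap d x \<in> Idx d"
proof -
  have "0 \<le> (x + int d div 2) mod int d" "(x + int d div 2) mod int d < int d"
    using d_pos by auto
  then show ?thesis
    unfolding wrap_def Idx_def using int_d_eq by auto
qed

lemma wrap_eq_self: "x \<in> Idx d \<Longrightarrow> wrap d x = x"
  unfolding wrap_def Idx_def using int_d_eq by auto

lemma dvd_diff_iff_eq_wrap:
  assumes "b \<in> Idx d"
  shows "int d dvd (b - c) \<longleftrightarrow> b = wrap d c"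
proof -
  have "int d dvd (b - c) \<longleftrightarrow> wrap d b = wrap d c"
    by (simp add: wrap_eq_iff mod_eq_dvd_iff)
  then show ?thesis
    using assms by (simp add: wrap_eq_self)
qed

lemma dvd_diff_Idx_iff: "a \<in> Idx d \<Longrightarrow> b \<in> Idx d \<Longrightarrow> int d dvd (a - b) \<longleftrightarrow> a = b"
  by (simp add: dvd_diff_iff_eq_wrap wrap_eq_self)

lemma eq_wrap_add_iff:
  assumes "i \<in> Idx d" "j \<in> Idx d" "u \<in> Idx d"
  shows "j = wrap d (i + u) \<longleftrightarrow> u = wrap d (j - i)"
proof -
  have "j = wrap d (i + u) \<longleftrightarrow> int d dvd (j - (i + u))"
    using assms(2) by (rule dvd_diff_iff_eq_wrap[symmetric])
  also have "\<dots> \<longleftrightarrow> int d dvd (u - (j - i))"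
    using dvd_minus_iff[of "int d" "u - (j - i)"] by (simp add: algebra_simps)
  also have "\<dots> \<longleftrightarrow> u = wrap d (j - i)"
    using assms(3) by (rule dvd_diff_iff_eq_wrap)
  finally show ?thesis .
qed

lemma wrap_diff_eq_0_iff:
  assumes "p \<in> Idx2 d"
  shows "wrap d (snd p - fst p) = 0 \<longleftrightarrow> fst p = snd p"
  using assms eq_wrap_add_iff[of "fst p" "snd p" 0] zero_in_Idx
  by (auto simp: mem_Idx2_iff wrap_eq_self)

lemma bij_betw_wrap_add: "bij_betw (\<lambda>k. wrap d (k + t)) (Idx d) (Idx d)"
proof -
  have inj: "inj_on (\<lambda>k. wrap d (k + t)) (Idx d)"
  proof (rule inj_onI)
    fix x y assume x: "x \<in> Idx d" and y: "y \<in> Idx d" and "wrap d (x + t) = wrap d (y + t)"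
    then have "(x + t) mod int d = (y + t) mod int d"
      by (simp add: wrap_eq_iff)
    then have "wrap d x = wrap d y"
      unfolding wrap_eq_iff by (metis add_diff_cancel_right' mod_diff_left_eq)
    with x y show "x = y"
      by (simp add: wrap_eq_self)
  qed
  then have "card ((\<lambda>k. wrap d (k + t)) ` Idx d) = card (Idx d)"
    by (simp add: card_image)
  then have "(\<lambda>k. wrap d (k + t)) ` Idx d = Idx d"
    using wrap_in_Idx by (intro card_subset_eq) auto
  with inj show ?thesis
    by (simp add: bij_betw_def)
qed

lemma sum_Idx_wrap_add: "(\<Sum>k\<in>Idx d. f (wrap d (k + t))) = (\<Sum>k\<in>Idx d. f k)"
  using sum.reindex_bij_betw[OF bij_betw_wrap_add] .

lemma sum_Idx2_wrap: "(\<Sum>r\<in>Idx2 d. f r) = (\<Sum>i\<in>Idx d. \<Sum>u\<in>Idx d. f (i, wrap d (i + u)))"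
  unfolding sum_Idx2
proof (rule sum.cong[OF refl])
  fix i
  show "(\<Sum>j\<in>Idx d. f (i, j)) = (\<Sum>u\<in>Idx d. f (i, wrap d (i + u)))"
    using sum_Idx_wrap_add[of "\<lambda>j. f (i, j)" i] by (simp add: add.commute)
qed

lemma sum_Idx_if_0: "(\<Sum>u\<in>Idx d. if u = 0 then a else f u) = a + (\<Sum>u\<in>Idx d - {0}. f u)"
proof -
  have "(\<Sum>u\<in>Idx d - {0}. if u = 0 then a else f u) = (\<Sum>u\<in>Idx d - {0}. f u)"
    by (rule sum.cong) auto
  then show ?thesis
    by (simp add: sum.remove[OF finite_Idx zero_in_Idx])
qed

lemma card_Idx_minus_0: "card (Idx d - {0}) = d - 1"
  using card_Idx zero_in_Idx by simp

lemma sum_omega_Idx: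
  "(\<Sum>k\<in>Idx d. omega d (of_int (k * c))) = (if int d dvd c then of_nat d else 0)"
proof (cases "int d dvd c")
  case True
  then have "omega d (of_int (k * c)) = 1" for k
    by (simp only: omega_of_int_eq_1_iff[OF d_pos] dvd_mult)
  with True show ?thesis
    using card_Idx by simp
next
  case False
  let ?S = "\<Sum>k\<in>Idx d. omega d (of_int (k * c))"
  have "?S = (\<Sum>k\<in>Idx d. omega d (of_int (wrap d (k + 1) * c)))"
    by (rule sum_Idx_wrap_add[symmetric])
  also have "\<dots> = (\<Sum>k\<in>Idx d. omega d (of_int ((k + 1) * c)))"
    by (intro sum.cong refl omega_of_int_mod_cong[OF d_pos] wrap_mod)
  also have "\<dots> = omega d (of_int c) * ?S"
    by (simp add: sum_distrib_left distrib_right algebra_simps flip: omega_add)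
  finally have "(1 - omega d (of_int c)) * ?S = 0"
    by (simp add: algebra_simps)
  moreover have "omega d (of_int c) \<noteq> 1"
    using False omega_of_int_eq_1_iff[OF d_pos] by blast
  ultimately have "?S = 0"
    by (metis mult_eq_0_iff right_minus_eq)
  with False show ?thesis
    by (simp only: if_False)
qed

lemma sum_omega_Idx2:
  "(\<Sum>k\<in>Idx2 d. omega d (of_int (dot2 k v))) = (if dvd2 (int d) v then of_nat d ^ 2 else 0)"
proof -
  have "(\<Sum>k\<in>Idx2 d. omega d (of_int (dot2 k v))) =
      (\<Sum>i\<in>Idx d. \<Sum>j\<in>Idx d. omega d (of_int (i * fst v)) * omega d (of_int (j * snd v)))"
    unfolding sum_Idx2 dot2_def by (simp add: omega_add)
  also have "\<dots> = (\<Sum>i\<in>Idx d. omega d (of_int (i * fst v))) * (\<Sum>j\<in>Idx d. omega d (of_int (j * snd v)))"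
    by (simp add: sum_product)
  finally show ?thesis
    by (simp only: sum_omega_Idx) (simp add: dvd2_def power2_eq_square)
qed

lemma sum_omega_Idx2_offdiag:
  "(\<Sum>k\<in>Idx2 d. if fst k = snd k then 0 else omega d (of_int (dot2 k v))) =
    (if dvd2 (int d) v then of_nat d ^ 2 else 0) - (if int d dvd (fst v + snd v) then of_nat d else 0)"
proof -
  have "(\<Sum>k\<in>Idx2 d. omega d (of_int (dot2 k v))) =
      (\<Sum>k\<in>Idx2 d. if fst k = snd k then 0 else omega d (of_int (dot2 k v))) +
      (\<Sum>k\<in>Idx2 d. if fst k = snd k then omega d (of_int (dot2 k v)) else 0)"
    by (subst sum.distrib[symmetric]) (rule sum.cong, auto)
  moreover have "(\<Sum>k\<in>Idx2 d. if fst k = snd k then omega d (of_int (dot2 k v)) else 0) =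
      (\<Sum>i\<in>Idx d. omega d (of_int (i * (fst v + snd v))))"
    unfolding sum_Idx2 dot2_def by (simp add: sum.delta distrib_left)
  ultimately show ?thesis
    by (simp only: sum_omega_Idx2 sum_omega_Idx) simp
qed

section \<open>The Fourier twirl\<close>

lemma fourier_kernel:
  "twirl_kernel d (fvec d) p q r s =
    (of_nat d * of_bool (dvd2 (int d) (p - q - r + s))
     + of_nat d * of_bool (dvd2 (int d) (p - prod.swap q - r + prod.swap s))
     - of_bool (int d dvd (fst p + snd p - fst q - snd q - fst r - snd r + fst s + snd s))) / of_nat d ^ 3"
proof -
  let ?T = "\<lambda>k k'. omega d (of_int (dot2 k (p - r) - dot2 k' (q - s))) / of_nat d ^ 4"
  have diag: "dot2 k (p - r) - dot2 k (q - s) = dot2 k (p - q - r + s)" for k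
    by (simp add: dot2_def algebra_simps)
  have swapped: "dot2 k (p - r) - dot2 (prod.swap k) (q - s) = dot2 k (p - prod.swap q - r + prod.swap s)" for k
    by (simp add: dot2_def algebra_simps)
  have "twirl_kernel d (fvec d) p q r s = (\<Sum>k\<in>Idx2 d. ?T k k + (if fst k = snd k then 0 else ?T k (prod.swap k)))"
    unfolding twirl_kernel_def fvec_kernel_term by (intro sum.cong refl sum_same_moments)
  also have "\<dots> = ((\<Sum>k\<in>Idx2 d. omega d (of_int (dot2 k (p - q - r + s)))) +
      (\<Sum>k\<in>Idx2 d. if fst k = snd k then 0 else omega d (of_int (dot2 k (p - prod.swap q - r + prod.swap s)))))
      / of_nat d ^ 4"
    unfolding diag swapped add_divide_distrib sum_divide_distrib
    by (simp add: sum.distrib if_distrib[of "\<lambda>x. x / of_nat d ^ 4"] cong: if_cong)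
  also have "\<dots> = (of_nat d * of_bool (dvd2 (int d) (p - q - r + s))
     + of_nat d * of_bool (dvd2 (int d) (p - prod.swap q - r + prod.swap s))
     - of_bool (int d dvd (fst p + snd p - fst q - snd q - fst r - snd r + fst s + snd s))) / of_nat d ^ 3"
    unfolding sum_omega_Idx2 sum_omega_Idx2_offdiag using d_pos
    by (simp add: power2_eq_square power3_eq_cube power4_eq_xxxx field_simps algebra_simps)
  finally show ?thesis .
qed

lemma dvd2_diff_swap_iff:
  assumes "r \<in> Idx2 d"
  shows "dvd2 (int d) (r - prod.swap r) \<longleftrightarrow> fst r = snd r"
  using assms dvd_diff_Idx_iff[of "fst r" "snd r"]
  by (auto simp: dvd2_def mem_Idx2_iff dvd_diff_commute)

lemma dvd2_swap_diff_iff: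
  assumes "r \<in> Idx2 d"
  shows "dvd2 (int d) (prod.swap r - r) \<longleftrightarrow> fst r = snd r"
  using assms dvd_diff_Idx_iff[of "snd r" "fst r"]
  by (auto simp: dvd2_def mem_Idx2_iff dvd_diff_commute)

lemma dvd2_diff_swap_shift_iff:
  assumes "p \<in> Idx2 d" and "r \<in> Idx2 d"
  shows "dvd2 (int d) (p - prod.swap p - r + prod.swap r) \<longleftrightarrow> snd r = wrap d (fst r + (snd p - fst p))"
proof -
  have "dvd2 (int d) (p - prod.swap p - r + prod.swap r) \<longleftrightarrow> int d dvd (snd r - (fst r + (snd p - fst p)))"
    unfolding dvd2_def by (auto simp: algebra_simps dvd_diff_commute)
  then show ?thesis
    using assms by (simp add: dvd_diff_iff_eq_wrap mem_Idx2_iff)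
qed

lemma fourier_kernel_diag_diag:
  assumes "p \<in> Idx2 d" and "r \<in> Idx2 d"
  shows "twirl_kernel d (fvec d) p p r r =
    (of_nat d - 1 + of_nat d * of_bool (snd r = wrap d (fst r + (snd p - fst p)))) / of_nat d ^ 3"
  using dvd2_diff_swap_shift_iff[OF assms] by (simp add: fourier_kernel dvd2_def)

lemma fourier_kernel_diag_swap:
  assumes "p \<in> Idx2 d" and "r \<in> Idx2 d" and "fst r \<noteq> snd r"
  shows "twirl_kernel d (fvec d) p p r (prod.swap r) = (of_nat d * of_bool (fst p = snd p) - 1) / of_nat d ^ 3"
proof -
  have "p - p - r + prod.swap r = prod.swap r - r"
    by simp
  then show ?thesis
    using assms dvd2_swap_diff_iff[OF assms(2)] dvd2_diff_swap_iff[OF assms(1)] by (simp add: fourier_kernel)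
qed

lemma fourier_kernel_swap_diag:
  assumes "p \<in> Idx2 d" and "r \<in> Idx2 d" and "fst p \<noteq> snd p"
  shows "twirl_kernel d (fvec d) p (prod.swap p) r r = (of_nat d * of_bool (fst r = snd r) - 1) / of_nat d ^ 3"
proof -
  have "p - prod.swap (prod.swap p) - r + prod.swap r = prod.swap r - r"
    by simp
  then show ?thesis
    using assms dvd2_swap_diff_iff[OF assms(2)] dvd2_diff_swap_iff[OF assms(1)] by (simp add: fourier_kernel)
qed

lemma fourier_kernel_swap_swap:
  assumes "p \<in> Idx2 d" and "r \<in> Idx2 d"
  shows "twirl_kernel d (fvec d) p (prod.swap p) r (prod.swap r) =
    (of_nat d * of_bool (snd r = wrap d (fst r + (snd p - fst p))) + of_nat d - 1) / of_nat d ^ 3"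
  using dvd2_diff_swap_shift_iff[OF assms] by (simp add: fourier_kernel dvd2_def)

lemma wrap_shift_offdiag:
  assumes "p \<in> Idx2 d" and "r \<in> Idx2 d" and "fst p \<noteq> snd p"
    and "snd r = wrap d (fst r + (snd p - fst p))"
  shows "fst r \<noteq> snd r"
proof
  assume "fst r = snd r"
  moreover have "int d dvd (snd r - (fst r + (snd p - fst p)))"
    using assms(2,4) dvd_diff_iff_eq_wrap[of "snd r" "fst r + (snd p - fst p)"] mem_Idx2_iff by blast
  ultimately have "int d dvd (snd p - fst p)"
    by (simp add: dvd_diff_commute)
  with assms(1,3) show False
    using dvd_diff_Idx_iff by (simp add: mem_Idx2_iff)
qed

lemma sum_Idx2_shift:
  "(\<Sum>r\<in>Idx2 d. if snd r = wrap d (fst r + c) then f r else 0) = (\<Sum>i\<in>Idx d. f (i, wrap d (i + c)))"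
  unfolding sum_Idx2 by (simp add: wrap_in_Idx)

lemma sum_Idx2_offdiag_swap:
  "(\<Sum>r\<in>Idx2 d. if fst r = snd r then 0 else X r (prod.swap r)) = swap_trace d X - diag_sum d X"
proof -
  have "swap_trace d X = (\<Sum>r\<in>Idx2 d. if fst r = snd r then 0 else X r (prod.swap r)) +
      (\<Sum>r\<in>Idx2 d. if fst r = snd r then X r (prod.swap r) else 0)"
    unfolding swap_trace_def by (subst sum.distrib[symmetric]) (rule sum.cong, auto)
  moreover have "(\<Sum>r\<in>Idx2 d. if fst r = snd r then X r (prod.swap r) else 0) = diag_sum d X"
    unfolding sum_Idx2 diag_sum_def by simp
  ultimately show ?thesis
    by simp
qed

lemma sum_Idx2_diag: "(\<Sum>r\<in>Idx2 d. if fst r = snd r then X r r else 0) = diag_sum d X"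
  unfolding sum_Idx2 diag_sum_def by simp

lemma shift_sum_wrap: "shift_sum d X (wrap d c) = shift_sum d X c"
  unfolding shift_sum_def wrap_add_wrap ..

lemma swap_shift_sum_wrap: "swap_shift_sum d X (wrap d c) = swap_shift_sum d X c"
  unfolding swap_shift_sum_def wrap_add_wrap ..

lemma shift_sum_0: "shift_sum d X 0 = diag_sum d X"
  unfolding shift_sum_def diag_sum_def by (simp add: wrap_eq_self)

lemma swap_shift_sum_0: "swap_shift_sum d X 0 = diag_sum d X"
  unfolding swap_shift_sum_def diag_sum_def by (simp add: wrap_eq_self)

lemma sum_shift_sum: "(\<Sum>u\<in>Idx d. shift_sum d X u) = trace2 d X"
  unfolding trace2_def sum_Idx2_wrap shift_sum_def by (rule sum.swap)

lemma sum_swap_shift_sum: "(\<Sum>u\<in>Idx d. swap_shift_sum d X u) = swap_trace d X"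
  unfolding swap_trace_def sum_Idx2_wrap swap_shift_sum_def by (subst sum.swap) simp

lemma Rmap_apply:
  assumes "p \<in> Idx2 d" and "q \<in> Idx2 d"
  shows "Rmap d X p q = (if same_moments p q then Gtmap d (Gmap d X) p q else 0)"
  unfolding Rmap_def comp_def using Gmap_apply[OF d_pos assms] by simp

lemma Gtmap_Gmap:
  assumes p: "p \<in> Idx2 d" and q: "q \<in> Idx2 d"
  shows "Gtmap d (Gmap d X) p q = (\<Sum>r\<in>Idx2 d. X r r * twirl_kernel d (fvec d) p q r r +
    (if fst r = snd r then 0 else X r (prod.swap r) * twirl_kernel d (fvec d) p q r (prod.swap r)))"
proof -
  have "Gtmap d (Gmap d X) p q = (\<Sum>r\<in>Idx2 d. \<Sum>s\<in>Idx2 d.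
      if same_moments r s then X r s * twirl_kernel d (fvec d) p q r s else 0)"
    unfolding Gtmap_def twirl_eq_kernel[OF d_pos phase_family_Vtop p q]
    by (intro sum.cong refl) (simp add: Gmap_apply[OF d_pos])
  also have "\<dots> = (\<Sum>r\<in>Idx2 d. X r r * twirl_kernel d (fvec d) p q r r +
    (if fst r = snd r then 0 else X r (prod.swap r) * twirl_kernel d (fvec d) p q r (prod.swap r)))"
    by (intro sum.cong refl sum_same_moments)
  finally show ?thesis .
qed

lemma Gtmap_Gmap_diag:
  assumes p: "p \<in> Idx2 d"
  shows "Gtmap d (Gmap d X) p p =
    ((of_nat d - 1) * trace2 d X + of_nat d * shift_sum d X (snd p - fst p)
     + (of_nat d * of_bool (fst p = snd p) - 1) * (swap_trace d X - diag_sum d X)) / of_nat d ^ 3"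
proof -
  let ?shift = "\<lambda>r. snd r = wrap d (fst r + (snd p - fst p))"
  have "Gtmap d (Gmap d X) p p = (\<Sum>r\<in>Idx2 d. ((of_nat d - 1) * X r r
      + of_nat d * (of_bool (?shift r) * X r r)
      + (of_nat d * of_bool (fst p = snd p) - 1) * (if fst r = snd r then 0 else X r (prod.swap r))) / of_nat d ^ 3)"
    unfolding Gtmap_Gmap[OF p p]
  proof (intro sum.cong refl)
    fix r assume r: "r \<in> Idx2 d"
    show "X r r * twirl_kernel d (fvec d) p p r r +
        (if fst r = snd r then 0 else X r (prod.swap r) * twirl_kernel d (fvec d) p p r (prod.swap r)) =
      ((of_nat d - 1) * X r r + of_nat d * (of_bool (?shift r) * X r r)
       + (of_nat d * of_bool (fst p = snd p) - 1) * (if fst r = snd r then 0 else X r (prod.swap r))) / of_nat d ^ 3"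
      using of_nat_d_neq_0 by (cases "fst r = snd r")
        (simp_all add: fourier_kernel_diag_diag[OF p r] fourier_kernel_diag_swap[OF p r] field_simps)
  qed
  then show ?thesis
    unfolding sum_divide_distrib[symmetric] sum.distrib sum_distrib_left[symmetric] of_bool_mult_eq_if
      sum_Idx2_shift sum_Idx2_offdiag_swap
    by (simp add: trace2_def shift_sum_def)
qed

lemma Gtmap_Gmap_swap:
  assumes p: "p \<in> Idx2 d" and ne: "fst p \<noteq> snd p"
  shows "Gtmap d (Gmap d X) p (prod.swap p) =
    (of_nat d * diag_sum d X - trace2 d X + of_nat d * swap_shift_sum d X (snd p - fst p)
     + (of_nat d - 1) * (swap_trace d X - diag_sum d X)) / of_nat d ^ 3"
proof -
  let ?shift = "\<lambda>r. snd r = wrap d (fst r + (snd p - fst p))"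
  have "Gtmap d (Gmap d X) p (prod.swap p) = (\<Sum>r\<in>Idx2 d. (of_nat d * (if fst r = snd r then X r r else 0)
      - X r r + of_nat d * (of_bool (?shift r) * X r (prod.swap r))
      + (of_nat d - 1) * (if fst r = snd r then 0 else X r (prod.swap r))) / of_nat d ^ 3)"
    unfolding Gtmap_Gmap[OF p swap_mem_Idx2[THEN iffD2, OF p]]
  proof (intro sum.cong refl)
    fix r assume r: "r \<in> Idx2 d"
    show "X r r * twirl_kernel d (fvec d) p (prod.swap p) r r +
        (if fst r = snd r then 0 else X r (prod.swap r) * twirl_kernel d (fvec d) p (prod.swap p) r (prod.swap r)) =
      (of_nat d * (if fst r = snd r then X r r else 0) - X r r + of_nat d * (of_bool (?shift r) * X r (prod.swap r))
       + (of_nat d - 1) * (if fst r = snd r then 0 else X r (prod.swap r))) / of_nat d ^ 3"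
    proof (cases "fst r = snd r")
      case True
      then have "\<not> ?shift r"
        using wrap_shift_offdiag[OF p r ne] by blast
      with True show ?thesis
        using of_nat_d_neq_0 by (simp add: fourier_kernel_swap_diag[OF p r ne] field_simps)
    next
      case False
      then show ?thesis
        using of_nat_d_neq_0 by (simp add: fourier_kernel_swap_diag[OF p r ne] fourier_kernel_swap_swap[OF p r] field_simps)
    qed
  qed
  then show ?thesis
    unfolding sum_divide_distrib[symmetric] sum.distrib sum_subtractf sum_distrib_left[symmetric]
      of_bool_mult_eq_if sum_Idx2_shift sum_Idx2_offdiag_swap sum_Idx2_diag
    by (simp add: trace2_def swap_shift_sum_def)
qed

section \<open>Iterating R\<close>

lemma pattern_op_cong:
  assumes p: "p \<in> Idx2 d"
    and xi: "\<And>u. u \<in> Idx d - {0} \<Longrightarrow> xi u = xi' u" and la: "\<And>u. u \<in> Idx d - {0} \<Longrightarrow> la u = la' u"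
  shows "pattern_op d xi la eta p q = pattern_op d xi' la' eta p q"
proof -
  have "fst p \<noteq> snd p" if "prod.swap p \<noteq> p"
    using that by (cases p) simp
  then show ?thesis
    unfolding pattern_op_def using xi la wrap_in_Idx wrap_diff_eq_0_iff[OF p] by auto
qed

lemma pattern_op_shift:
  assumes "i \<in> Idx d" and "u \<in> Idx d"
  shows "pattern_op d xi la eta (i, wrap d (i + u)) (i, wrap d (i + u)) = (if u = 0 then eta else xi u)"
    and "pattern_op d xi la eta (i, wrap d (i + u)) (wrap d (i + u), i) = (if u = 0 then eta else la u)"
proof -
  have "wrap d (wrap d (i + u) - i) = u"
    using eq_wrap_add_iff[OF assms(1) wrap_in_Idx[of "i + u"] assms(2)] by simp
  moreover have "i = wrap d (i + u) \<longleftrightarrow> u = 0" and "wrap d (i + u) = i \<longleftrightarrow> u = 0"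
    using eq_wrap_add_iff[OF assms(1) assms(1) assms(2)] by (auto simp: wrap_eq_self zero_in_Idx)
  ultimately show "pattern_op d xi la eta (i, wrap d (i + u)) (i, wrap d (i + u)) = (if u = 0 then eta else xi u)"
    and "pattern_op d xi la eta (i, wrap d (i + u)) (wrap d (i + u), i) = (if u = 0 then eta else la u)"
    unfolding pattern_op_def using assms(1) by (cases "u = 0"; simp add: wrap_eq_self)+
qed

lemma Rmap_apply_trace_free:
  assumes tr: "trace2 d X = 0" and sw: "swap_trace d X = 0" and p: "p \<in> Idx2 d" and q: "q \<in> Idx2 d"
  shows "Rmap d X p q = pattern_op d
    (\<lambda>u. shift_sum d X u / of_nat d ^ 2 + diag_sum d X / of_nat d ^ 3)
    (\<lambda>u. swap_shift_sum d X u / of_nat d ^ 2 + diag_sum d X / of_nat d ^ 3)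
    (diag_sum d X / of_nat d ^ 3) p q"
proof -
  consider "q = p" "fst p = snd p" | "q = p" "fst p \<noteq> snd p" | "q = prod.swap p" "fst p \<noteq> snd p"
    | "\<not> same_moments p q"
    using same_moments_iff by (cases p) auto
  then show ?thesis
  proof cases
    case 1
    then have "Gtmap d (Gmap d X) p p = diag_sum d X / of_nat d ^ 3"
      unfolding Gtmap_Gmap_diag[OF p] by (simp add: tr sw shift_sum_0 algebra_simps)
    with 1 show ?thesis
      unfolding Rmap_apply[OF p q] by (simp add: same_moments_iff pattern_op_def)
  next
    case 2
    have "Gtmap d (Gmap d X) p p =
        shift_sum d X (wrap d (snd p - fst p)) / of_nat d ^ 2 + diag_sum d X / of_nat d ^ 3"
      unfolding Gtmap_Gmap_diag[OF p] using 2 of_nat_d_neq_0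
      by (simp add: tr sw shift_sum_wrap field_simps power2_eq_square power3_eq_cube)
    with 2 show ?thesis
      unfolding Rmap_apply[OF p q] by (simp add: same_moments_iff pattern_op_def)
  next
    case 3
    then have "prod.swap p \<noteq> p"
      by (cases p) simp
    from 3 have "Gtmap d (Gmap d X) p (prod.swap p) =
        swap_shift_sum d X (wrap d (snd p - fst p)) / of_nat d ^ 2 + diag_sum d X / of_nat d ^ 3"
      unfolding Gtmap_Gmap_swap[OF p 3(2)] using of_nat_d_neq_0
      by (simp add: tr sw swap_shift_sum_wrap field_simps power2_eq_square power3_eq_cube)
    with 3 \<open>prod.swap p \<noteq> p\<close> show ?thesis
      unfolding Rmap_apply[OF p q] by (simp add: same_moments_iff pattern_op_def)
  next
    case 4
    then show ?thesis
      unfolding Rmap_apply[OF p q] by (simp add: same_moments_iff pattern_op_def)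
  qed
qed

lemma shift_sums_pattern_op:
  assumes Y: "\<And>p q. p \<in> Idx2 d \<Longrightarrow> q \<in> Idx2 d \<Longrightarrow> Y p q = pattern_op d xi la eta p q"
    and u: "u \<in> Idx d"
  shows "shift_sum d Y u = of_nat d * (if u = 0 then eta else xi u)"
    and "swap_shift_sum d Y u = of_nat d * (if u = 0 then eta else la u)"
  using Y[of "(i, wrap d (i + u))" for i] pattern_op_shift[OF _ u] wrap_in_Idx
  by (simp_all add: shift_sum_def swap_shift_sum_def mem_Idx2_iff card_Idx cong: sum.cong)

lemma traces_pattern_op:
  assumes Y: "\<And>p q. p \<in> Idx2 d \<Longrightarrow> q \<in> Idx2 d \<Longrightarrow> Y p q = pattern_op d xi la eta p q"
  shows "trace2 d Y = of_nat d * (eta + (\<Sum>u\<in>Idx d - {0}. xi u))"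
    and "swap_trace d Y = of_nat d * (eta + (\<Sum>u\<in>Idx d - {0}. la u))"
proof -
  have "trace2 d Y = (\<Sum>u\<in>Idx d. of_nat d * (if u = 0 then eta else xi u))"
    and "swap_trace d Y = (\<Sum>u\<in>Idx d. of_nat d * (if u = 0 then eta else la u))"
    unfolding sum_shift_sum[symmetric] sum_swap_shift_sum[symmetric]
    by (simp_all add: shift_sums_pattern_op[OF Y] cong: sum.cong)
  then show "trace2 d Y = of_nat d * (eta + (\<Sum>u\<in>Idx d - {0}. xi u))"
    and "swap_trace d Y = of_nat d * (eta + (\<Sum>u\<in>Idx d - {0}. la u))"
    by (simp_all only: sum_distrib_left[symmetric] sum_Idx_if_0)
qed

lemma Rmap_trace_free:
  assumes tr: "trace2 d X = 0" and sw: "swap_trace d X = 0"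
  shows "trace2 d (Rmap d X) = 0" and "swap_trace d (Rmap d X) = 0"
proof -
  have card: "of_nat (card (Idx d - {0})) = (of_nat d - 1 :: complex)"
    using card_Idx_minus_0 two_le_d by (simp add: of_nat_diff)
  have "(\<Sum>u\<in>Idx d - {0}. shift_sum d X u) = - diag_sum d X"
    and "(\<Sum>u\<in>Idx d - {0}. swap_shift_sum d X u) = - diag_sum d X"
    using sum.remove[OF finite_Idx zero_in_Idx, of "shift_sum d X"]
      sum.remove[OF finite_Idx zero_in_Idx, of "swap_shift_sum d X"]
    by (simp_all add: sum_shift_sum sum_swap_shift_sum shift_sum_0 swap_shift_sum_0 tr sw add_eq_0_iff)
  moreover note traces_pattern_op[OF Rmap_apply_trace_free[OF tr sw]]
  ultimately show "trace2 d (Rmap d X) = 0" and "swap_trace d (Rmap d X) = 0"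
    using of_nat_d_neq_0 by (simp_all add: sum.distrib sum_divide_distrib[symmetric] card field_simps power2_eq_square
        power3_eq_cube)
qed

lemma Rmap_apply_pattern_op:
  assumes Y: "\<And>p q. p \<in> Idx2 d \<Longrightarrow> q \<in> Idx2 d \<Longrightarrow> Y p q = pattern_op d xi la eta p q"
    and tr: "trace2 d Y = 0" and sw: "swap_trace d Y = 0" and p: "p \<in> Idx2 d" and q: "q \<in> Idx2 d"
  shows "Rmap d Y p q = pattern_op d (\<lambda>u. xi u / of_nat d + eta / of_nat d ^ 2)
    (\<lambda>u. la u / of_nat d + eta / of_nat d ^ 2) (eta / of_nat d ^ 2) p q"
proof -
  have diag: "diag_sum d Y = of_nat d * eta"
    using shift_sums_pattern_op(1)[OF Y zero_in_Idx] by (simp add: shift_sum_0)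
  have eta: "diag_sum d Y / of_nat d ^ 3 = eta / of_nat d ^ 2"
    using of_nat_d_neq_0 by (simp add: diag power2_eq_square power3_eq_cube)
  show ?thesis
    unfolding Rmap_apply_trace_free[OF tr sw p q] eta
  proof (rule pattern_op_cong[OF p])
    fix u assume "u \<in> Idx d - {0}"
    then show "shift_sum d Y u / of_nat d ^ 2 + eta / of_nat d ^ 2 = xi u / of_nat d + eta / of_nat d ^ 2"
      and "swap_shift_sum d Y u / of_nat d ^ 2 + eta / of_nat d ^ 2 = la u / of_nat d + eta / of_nat d ^ 2"
      using of_nat_d_neq_0 by (simp_all add: shift_sums_pattern_op[OF Y] power2_eq_square)
  qed
qed

lemma trace_free_Rmap_power:
  assumes "X \<in> Kspace d"
  shows "trace2 d ((Rmap d ^^ n) X) = 0 \<and> swap_trace d ((Rmap d ^^ n) X) = 0"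
proof (induction n)
  case 0
  then show ?case
    using assms by (simp add: trace2_eq_0_if_Kspace swap_trace_eq_0_if_Kspace)
next
  case (Suc n)
  then show ?case
    using Rmap_trace_free by simp
qed

lemma Rmap_power_pattern_op:
  assumes K: "X \<in> Kspace d" and p: "p \<in> Idx2 d" and q: "q \<in> Idx2 d"
  shows "(Rmap d ^^ Suc n) X p q = pattern_op d
    (\<lambda>u. decay_coeff (of_nat d) (shift_sum d X u) (diag_sum d X) (Suc n))
    (\<lambda>u. decay_coeff (of_nat d) (swap_shift_sum d X u) (diag_sum d X) (Suc n))
    (diag_sum d X / of_nat d ^ (2 * Suc n + 1)) p q"
  using p q
proof (induction n arbitrary: p q)
  case 0
  then show ?case
    using Rmap_apply_trace_free[OF trace2_eq_0_if_Kspace[OF K] swap_trace_eq_0_if_Kspace[OF K]]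
    by (simp add: decay_coeff_1[OF of_nat_d_neq_0 of_nat_d_neq_1])
next
  case (Suc n)
  then have "(Rmap d ^^ Suc (Suc n)) X p q = pattern_op d
    (\<lambda>u. decay_coeff (of_nat d) (shift_sum d X u) (diag_sum d X) (Suc n) / of_nat d
         + diag_sum d X / of_nat d ^ (2 * Suc n + 1) / of_nat d ^ 2)
    (\<lambda>u. decay_coeff (of_nat d) (swap_shift_sum d X u) (diag_sum d X) (Suc n) / of_nat d
         + diag_sum d X / of_nat d ^ (2 * Suc n + 1) / of_nat d ^ 2)
    (diag_sum d X / of_nat d ^ (2 * Suc n + 1) / of_nat d ^ 2) p q"
    using trace_free_Rmap_power[OF K, of "Suc n"] by (simp add: Rmap_apply_pattern_op)
  also have "\<dots> = pattern_op d
    (\<lambda>u. decay_coeff (of_nat d) (shift_sum d X u) (diag_sum d X) (Suc (Suc n)))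
    (\<lambda>u. decay_coeff (of_nat d) (swap_shift_sum d X u) (diag_sum d X) (Suc (Suc n)))
    (diag_sum d X / of_nat d ^ (2 * Suc (Suc n) + 1)) p q"
  proof -
    have "diag_sum d X / of_nat d ^ (2 * Suc n + 1) / of_nat d ^ 2 = diag_sum d X / of_nat d ^ (2 * Suc (Suc n) + 1)"
      by (simp add: power_add power2_eq_square)
    then show ?thesis
      by (simp only: decay_coeff_Suc[OF of_nat_d_neq_0 of_nat_d_neq_1, of _ _ "Suc n"])
  qed
  finally show ?case .
qed

lemma sum_ketbra2_apply:
  assumes "p \<in> Idx2 d"
  shows "(\<Sum>a\<in>Idx d. ketbra2 (a, g a) (h a) p q) = (if snd p = g (fst p) \<and> q = h (fst p) then 1 else 0)"
proof -
  have "(\<Sum>a\<in>Idx d. ketbra2 (a, g a) (h a) p q) =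
      (\<Sum>a\<in>Idx d. if a = fst p then if snd p = g (fst p) \<and> q = h (fst p) then 1 else 0 else 0)"
    unfolding ketbra2_def by (intro sum.cong refl) (auto simp: prod_eq_iff)
  then show ?thesis
    using assms by (simp add: mem_Idx2_iff)
qed

lemma sum_ketbra2_shift_apply:
  assumes p: "p \<in> Idx2 d" and u: "u \<in> Idx d"
  shows "(\<Sum>a\<in>Idx d. ketbra2 (a, wrap d (a + u)) (a, wrap d (a + u)) p q) =
      (if u = wrap d (snd p - fst p) \<and> q = p then 1 else 0)"
    and "(\<Sum>a\<in>Idx d. ketbra2 (a, wrap d (a + u)) (wrap d (a + u), a) p q) =
      (if u = wrap d (snd p - fst p) \<and> q = prod.swap p then 1 else 0)"
proof -
  obtain i j where ij: "p = (i, j)" "i \<in> Idx d" "j \<in> Idx d"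
    using p by (cases p) (simp add: mem_Idx2_iff)
  have "j = wrap d (i + u) \<longleftrightarrow> u = wrap d (j - i)"
    using eq_wrap_add_iff[OF ij(2,3) u] .
  then show "(\<Sum>a\<in>Idx d. ketbra2 (a, wrap d (a + u)) (a, wrap d (a + u)) p q) =
      (if u = wrap d (snd p - fst p) \<and> q = p then 1 else 0)"
    and "(\<Sum>a\<in>Idx d. ketbra2 (a, wrap d (a + u)) (wrap d (a + u), a) p q) =
      (if u = wrap d (snd p - fst p) \<and> q = prod.swap p then 1 else 0)"
    by (simp_all only: sum_ketbra2_apply[OF p]) (auto simp: ij(1))
qed

lemma ketbra_expansion_eq_pattern_op:
  assumes p: "p \<in> Idx2 d" and q: "q \<in> Idx2 d"
  shows "((\<Sum>u\<in>Idx d - {0}. smul2 (xi u) (\<Sum>a\<in>Idx d. ketbra2 (a, wrap d (a + u)) (a, wrap d (a + u))))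
     + (\<Sum>u\<in>Idx d - {0}. smul2 (la u) (\<Sum>a\<in>Idx d. ketbra2 (a, wrap d (a + u)) (wrap d (a + u), a)))
     + smul2 eta (\<Sum>a\<in>Idx d. ketbra2 (a, a) (a, a))) p q = pattern_op d xi la eta p q"
proof -
  let ?u = "wrap d (snd p - fst p)"
  have "(\<Sum>u\<in>Idx d - {0}. smul2 (xi u) (\<Sum>a\<in>Idx d. ketbra2 (a, wrap d (a + u)) (a, wrap d (a + u)))) p q =
      (\<Sum>u\<in>Idx d - {0}. if u = ?u then if q = p then xi u else 0 else 0)"
    and "(\<Sum>u\<in>Idx d - {0}. smul2 (la u) (\<Sum>a\<in>Idx d. ketbra2 (a, wrap d (a + u)) (wrap d (a + u), a))) p q =
      (\<Sum>u\<in>Idx d - {0}. if u = ?u then if q = prod.swap p then la u else 0 else 0)"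
    unfolding sum_fun_apply smul2_def
    by (intro sum.cong refl; simp add: sum_ketbra2_shift_apply[OF p])+
  then have xi_part: "(\<Sum>u\<in>Idx d - {0}. smul2 (xi u)
        (\<Sum>a\<in>Idx d. ketbra2 (a, wrap d (a + u)) (a, wrap d (a + u)))) p q =
      (if fst p \<noteq> snd p \<and> q = p then xi ?u else 0)"
    and la_part: "(\<Sum>u\<in>Idx d - {0}. smul2 (la u)
        (\<Sum>a\<in>Idx d. ketbra2 (a, wrap d (a + u)) (wrap d (a + u), a))) p q =
      (if fst p \<noteq> snd p \<and> q = prod.swap p then la ?u else 0)"
    by (simp_all add: wrap_in_Idx wrap_diff_eq_0_iff[OF p])
  have eta_part: "smul2 eta (\<Sum>a\<in>Idx d. ketbra2 (a, a) (a, a)) p q = (if fst p = snd p \<and> q = p then eta else 0)"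
    unfolding smul2_def sum_fun_apply using sum_ketbra2_apply[OF p, of "\<lambda>a. a" "\<lambda>a. (a, a)" q]
    by (auto simp: prod_eq_iff)
  have "prod.swap p = p \<longleftrightarrow> fst p = snd p"
    by (cases p) auto
  then show ?thesis
    unfolding plus_fun_apply xi_part la_part eta_part pattern_op_def by auto
qed

end

theorem lemma6:
  fixes d :: nat and X :: op2 and l :: nat
  assumes "d \<ge> 2" and "even d"
    and "X \<in> Kspace d"
    and "l \<ge> 1"
  shows "\<forall>p\<in>Idx2 d. \<forall>q\<in>Idx2 d.
    (Rmap d ^^ l) X p q =
    ((\<Sum>u\<in>Idx d - {0}.
        smul2 ((\<Sum>i\<in>Idx d. X (i, wrap d (i + u)) (i, wrap d (i + u))) / of_nat d ^ (l + 1)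
               + (\<Sum>i\<in>Idx d. X (i, i) (i, i)) / of_nat d ^ (l + 1)
                 * ((1 - 1 / of_nat d ^ l) / (of_nat d - 1)))
          (\<Sum>a\<in>Idx d. ketbra2 (a, wrap d (a + u)) (a, wrap d (a + u))))
     + (\<Sum>u\<in>Idx d - {0}.
        smul2 ((\<Sum>i\<in>Idx d. X (i, wrap d (i + u)) (wrap d (i + u), i)) / of_nat d ^ (l + 1)
               + (\<Sum>i\<in>Idx d. X (i, i) (i, i)) / of_nat d ^ (l + 1)
                 * ((1 - 1 / of_nat d ^ l) / (of_nat d - 1)))
          (\<Sum>a\<in>Idx d. ketbra2 (a, wrap d (a + u)) (wrap d (a + u), a)))
     + smul2 ((\<Sum>i\<in>Idx d. X (i, i) (i, i)) / of_nat d ^ (2 * l + 1))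
          (\<Sum>a\<in>Idx d. ketbra2 (a, a) (a, a))) p q"
proof -
  interpret even_dim d
    using assms(1,2) by unfold_locales
  obtain n where l: "l = Suc n"
    using assms(4) by (cases l) auto
  have pattern: "(Rmap d ^^ l) X p q = pattern_op d
      (\<lambda>u. decay_coeff (of_nat d) (shift_sum d X u) (diag_sum d X) l)
      (\<lambda>u. decay_coeff (of_nat d) (swap_shift_sum d X u) (diag_sum d X) l)
      (diag_sum d X / of_nat d ^ (2 * l + 1)) p q" if "p \<in> Idx2 d" "q \<in> Idx2 d" for p q
    unfolding l using assms(3) that by (rule Rmap_power_pattern_op)
  show ?thesis
    by (simp only: pattern ketbra_expansion_eq_pattern_op decay_coeff_def shift_sum_def swap_shift_sum_def
        diag_sum_def simp_thms ball_triv cong: ball_cong)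
qed

end
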